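(* Fix a number $x$ (real or complex) and let $(u_n)_{n\ge0}$ satisfy $(n+\tfrac12)u_{n+1}=2xn\,u_n-(n-\tfrac12)u_{n-1}$ for all $n\ge1$. Define $\hat u_n=2x\,u_n-u_{n+1}-u_{n-1}$ for $n\ge1$. Then $(n+\tfrac32)\hat u_{n+1}=2xn\,\hat u_n-(n-\tfrac32)\hat u_{n-1}$ for all $n\ge2$. *)

theory Defs
  imports Complex_Main
begin

definition uhat :: "complex \<Rightarrow> (nat \<Rightarrow> complex) \<Rightarrow> nat \<Rightarrow> complex" where
  "uhat x u n = 2 * x * u n - u (n + 1) - u (n - 1)"

end

theory Submission
  imports Defs
begin

text \<open>Let \<open>d\<^sub>n\<close> be the defect of the recurrence for \<open>u\<close> at \<open>n\<close>. The recurrence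
  expression for \<open>uhat\<close> at \<open>n\<close> equals \<open>2x d\<^sub>n - d\<^sub>n\<^sub>+\<^sub>1 - d\<^sub>n\<^sub>-\<^sub>1\<close>, a polynomial
  identity in \<open>x\<close>, \<open>n\<close> and five consecutive terms of \<open>u\<close>; hence it vanishes as soon as
  the recurrence holds at \<open>n - 1\<close>, \<open>n\<close> and \<open>n + 1\<close>.\<close>

definition recurrence_defect :: "complex \<Rightarrow> (nat \<Rightarrow> complex) \<Rightarrow> nat \<Rightarrow> complex" where
  "recurrence_defect x u n =
     (of_nat n + 1/2) * u (n + 1) - 2 * x * of_nat n * u n + (of_nat n - 1/2) * u (n - 1)"

lemma uhat_recurrence_expr_eq_defects:
  assumes "n \<ge> 2"
  shows "(of_nat n + 3/2) * uhat x u (n + 1) - 2 * x * of_nat n * uhat x u n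
           + (of_nat n - 3/2) * uhat x u (n - 1)
         = 2 * x * recurrence_defect x u n - recurrence_defect x u (n + 1)
           - recurrence_defect x u (n - 1)"
proof -
  obtain m where "n = m + 2"
    using assms by (metis add.commute le_add_diff_inverse)
  then show ?thesis
    unfolding uhat_def recurrence_defect_def by (simp add: algebra_simps numeral_eq_Suc)
qed

theorem theorem2:
  fixes x :: complex and u :: "nat \<Rightarrow> complex"
  assumes rec: "\<And>n. n \<ge> 1 \<Longrightarrow>
     (of_nat n + 1/2) * u (n + 1) = 2 * x * of_nat n * u n - (of_nat n - 1/2) * u (n - 1)"
  shows "\<And>n. n \<ge> 2 \<Longrightarrow>
     (of_nat n + 3/2) * uhat x u (n + 1) = 2 * x * of_nat n * uhat x u n - (of_nat n - 3/2) * uhat x u (n - 1)"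
proof -
  fix n :: nat
  assume n: "n \<ge> 2"
  have defect_zero: "recurrence_defect x u k = 0" if "k \<ge> 1" for k
    using rec[OF that] unfolding recurrence_defect_def by simp
  have "(of_nat n + 3/2) * uhat x u (n + 1) - 2 * x * of_nat n * uhat x u n
          + (of_nat n - 3/2) * uhat x u (n - 1) = 0"
    using n by (simp only: uhat_recurrence_expr_eq_defects defect_zero) simp
  then show "(of_nat n + 3/2) * uhat x u (n + 1)
      = 2 * x * of_nat n * uhat x u n - (of_nat n - 3/2) * uhat x u (n - 1)"
    by (simp add: algebra_simps)
qed

end
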